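(* Let $p$ be a prime, $e\geq 2$, and $G$ a finite abelian $p$-group. Let $\overline{f_e}: V(\mathbb{Z}_{p^e}G)\to V(\mathbb{Z}_{p^{e-1}}G)$ be the group homomorphism induced by the ring homomorphism $\mathbb{Z}_{p^e}G\to\mathbb{Z}_{p^{e-1}}G$, $\sum_g a_g g\mapsto \sum_g (a_g \bmod p^{e-1}) g$. Then $\ker(\overline{f_e})=1+p^{e-1}\omega(\mathbb{Z}_{p^e}G)$ is an elementary abelian $p$-group of order $p^{|G|-1}$ and \[ V(\mathbb{Z}_{p^e}G)/\big(1+p^{e-1}\omega(\mathbb{Z}_{p^e}G)\big)\cong V(\mathbb{Z}_{p^{e-1}}G). \]
   Context: $\mathbb{Z}_{p^k}$ is the ring of residues modulo $p^k$. For a commutative ring $R$, $\omega(RG)$ is the augmentation ideal of $RG$ (elements whose coefficients sum to $0$), and $V(RG)=1+\omega(RG)$ is the group of normalized units. $1+p^{e-1}\omega(\mathbb{Z}_{p^e}G)=\{1+p^{e-1}z: z\in\omega(\mathbb{Z}_{p^e}G)\}$. *)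

theory Defs
  imports "HOL-Algebra.Algebra" "HOL-Computational_Algebra.Primes"
begin

text \<open>The group ring Z_m G for a finite group G (HOL-Algebra structure) and a
modulus m: elements are coefficient functions a :: 'a => int, with a g in {0..<m}
for g in carrier G (canonical residues mod m) and a g = 0 outside carrier G.\<close>

definition gr_elems :: "nat \<Rightarrow> ('a, 'b) monoid_scheme \<Rightarrow> ('a \<Rightarrow> int) set" where
  "gr_elems m G = {a. (\<forall>g \<in> carrier G. 0 \<le> a g \<and> a g < int m) \<and> (\<forall>g. g \<notin> carrier G \<longrightarrow> a g = 0)}"

definition gr_mult :: "nat \<Rightarrow> ('a, 'b) monoid_scheme \<Rightarrow> ('a \<Rightarrow> int) \<Rightarrow> ('a \<Rightarrow> int) \<Rightarrow> ('a \<Rightarrow> int)" where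
  "gr_mult m G a b = (\<lambda>g. if g \<in> carrier G
      then (\<Sum>h \<in> carrier G. a h * b (inv\<^bsub>G\<^esub> h \<otimes>\<^bsub>G\<^esub> g)) mod int m else 0)"

definition gr_one :: "nat \<Rightarrow> ('a, 'b) monoid_scheme \<Rightarrow> ('a \<Rightarrow> int)" where
  "gr_one m G = (\<lambda>g. if g = \<one>\<^bsub>G\<^esub> then 1 mod int m else 0)"

definition gr_add :: "nat \<Rightarrow> ('a, 'b) monoid_scheme \<Rightarrow> ('a \<Rightarrow> int) \<Rightarrow> ('a \<Rightarrow> int) \<Rightarrow> ('a \<Rightarrow> int)" where
  "gr_add m G a b = (\<lambda>g. if g \<in> carrier G then (a g + b g) mod int m else 0)"

definition gr_scal :: "nat \<Rightarrow> ('a, 'b) monoid_scheme \<Rightarrow> int \<Rightarrow> ('a \<Rightarrow> int) \<Rightarrow> ('a \<Rightarrow> int)" where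
  "gr_scal m G c a = (\<lambda>g. if g \<in> carrier G then (c * a g) mod int m else 0)"

definition augmentation :: "nat \<Rightarrow> ('a, 'b) monoid_scheme \<Rightarrow> ('a \<Rightarrow> int) \<Rightarrow> int" where
  "augmentation m G a = (\<Sum>g \<in> carrier G. a g) mod int m"

definition aug_ideal :: "nat \<Rightarrow> ('a, 'b) monoid_scheme \<Rightarrow> ('a \<Rightarrow> int) set" where
  "aug_ideal m G = {a \<in> gr_elems m G. augmentation m G a = 0}"

definition V :: "nat \<Rightarrow> ('a, 'b) monoid_scheme \<Rightarrow> ('a \<Rightarrow> int) monoid" where
  "V m G = \<lparr> carrier = {a \<in> gr_elems m G. augmentation m G a = 1 mod int m \<and>
                (\<exists>b \<in> gr_elems m G. gr_mult m G a b = gr_one m G \<and> gr_mult m G b a = gr_one m G)},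
            monoid.mult = gr_mult m G, one = gr_one m G \<rparr>"

definition gr_reduce :: "nat \<Rightarrow> ('a \<Rightarrow> int) \<Rightarrow> ('a \<Rightarrow> int)" where
  "gr_reduce n a = (\<lambda>g. a g mod int n)"

definition one_plus_aug :: "nat \<Rightarrow> nat \<Rightarrow> ('a, 'b) monoid_scheme \<Rightarrow> ('a \<Rightarrow> int) set" where
  "one_plus_aug p e G = {gr_add (p^e) G (gr_one (p^e) G) (gr_scal (p^e) G (int (p^(e-1))) z) | z. z \<in> aug_ideal (p^e) G}"

end

theory Submission
  imports Defs "HOL-Number_Theory.Cong"
begin

text \<open>
Write \<open>N = p^(e-1)\<close>. Since \<open>N\<^sup>2\<close> is divisible by \<open>p^e\<close>, the elements \<open>1 + N z\<close> of
\<open>Z_{p^e} G\<close> multiply by adding the \<open>z\<close>'s, so \<open>z \<mapsto> 1 + N z\<close> is a homomorphism from the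
additive group of \<open>Z_p G\<close> whose image, restricted to \<open>z\<close> of augmentation divisible by \<open>p\<close>,
is exactly the kernel of reduction mod \<open>N\<close>. Hence the kernel is elementary abelian of order
\<open>p^(|G|-1)\<close>. Reduction is onto: lift a normalized unit \<open>b\<close> to \<open>a\<close> of augmentation 1; if
\<open>a c = 1 + N r\<close> for a lift \<open>c\<close> of \<open>b\<^sup>-\<^sup>1\<close>, then \<open>c (1 - N r)\<close> inverts \<open>a\<close>.
The first isomorphism theorem gives the quotient.
\<close>

lemma comm_group_subgroup_carrier:
  assumes "comm_group G" and "subgroup H G"
  shows "comm_group (G\<lparr>carrier := H\<rparr>)"
proof -
  interpret comm_group G by (fact assms(1))
  show ?thesis
    by (rule group.group_comm_groupI[OF subgroup.subgroup_is_group[OF assms(2) is_group]])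
       (use subgroup.subset[OF assms(2)] in \<open>auto intro: m_comm\<close>)
qed

lemma cong_obtain_quotient:
  assumes "\<And>x. x \<in> A \<Longrightarrow> [u x = v x] (mod (n::int))"
  obtains w where "\<forall>x \<in> A. u x = v x + n * w x"
proof
  show "\<forall>x \<in> A. u x = v x + n * ((u x - v x) div n)"
    using assms by (simp add: cong_iff_dvd_diff)
qed

lemma PiE_dvd_sum_apply:
  fixes w :: "'a \<Rightarrow> int"
  assumes "finite A" "a \<in> A" and "w \<in> A \<rightarrow>\<^sub>E {0..<int m}" and "int m dvd (\<Sum>x\<in>A. w x)"
  shows "w a = (- (\<Sum>x\<in>A - {a}. w x)) mod int m"
proof -
  have "w a = w a mod int m" using PiE_mem[OF assms(3,2)] by simp
  also have "\<dots> = (- (\<Sum>x\<in>A - {a}. w x)) mod int m"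
    using assms(4) assms(1,2) by (simp add: sum.remove mod_eq_dvd_iff)
  finally show ?thesis .
qed

lemma bij_betw_restrict_PiE_dvd_sum:
  fixes A :: "'a set" and m :: nat
  assumes A: "finite A" "a \<in> A" and m: "m > 0"
  shows "bij_betw (\<lambda>w. restrict w (A - {a}))
           {w \<in> A \<rightarrow>\<^sub>E {0..<int m}. int m dvd (\<Sum>x\<in>A. w x)} (A - {a} \<rightarrow>\<^sub>E {0..<int m})"
    (is "bij_betw _ ?S ?T")
proof -
  let ?rest = "\<lambda>v :: 'a \<Rightarrow> int. \<Sum>x\<in>A - {a}. v x"
  let ?extend = "\<lambda>v. v(a := (- ?rest v) mod int m)"
  show ?thesis
  proof (rule bij_betw_byWitness[where f' = ?extend])
    show "\<forall>w\<in>?S. ?extend (restrict w (A - {a})) = w"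
    proof
      fix w assume "w \<in> ?S"
      then have w: "w \<in> A \<rightarrow>\<^sub>E {0..<int m}" and "w a = (- ?rest w) mod int m"
        using PiE_dvd_sum_apply[OF A] by auto
      moreover have "?rest (restrict w (A - {a})) = ?rest w" by (rule sum.cong) auto
      ultimately show "?extend (restrict w (A - {a})) = w"
        using PiE_arb[OF w] by (auto simp: fun_eq_iff)
    qed
    show "\<forall>v\<in>?T. restrict (?extend v) (A - {a}) = v"
      by (auto simp: fun_eq_iff dest: PiE_arb)
    show "(\<lambda>w. restrict w (A - {a})) ` ?S \<subseteq> ?T"
    proof (rule image_subsetI)
      fix w assume "w \<in> ?S"
      then have "\<forall>x \<in> A - {a}. w x \<in> {0..<int m}" by (auto simp: PiE_iff)
      then show "restrict w (A - {a}) \<in> ?T" by (simp only: restrict_PiE_iff)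
    qed
    show "?extend ` ?T \<subseteq> ?S"
    proof (rule image_subsetI)
      fix v assume v: "v \<in> ?T"
      have "?extend v \<in> A \<rightarrow>\<^sub>E {0..<int m}"
        using v m A by (auto simp: PiE_iff extensional_def)
      moreover have "?rest (?extend v) = ?rest v" by (rule sum.cong) auto
      then have "(\<Sum>x\<in>A. ?extend v x) mod int m = ((- ?rest v) mod int m + ?rest v) mod int m"
        using A by (simp add: sum.remove)
      then have "int m dvd (\<Sum>x\<in>A. ?extend v x)"
        by (simp add: mod_add_left_eq dvd_eq_mod_eq_0)
      ultimately show "?extend v \<in> ?S" by simp
    qed
  qed
qed

lemma card_PiE_dvd_sum:
  assumes "finite A" "a \<in> A" and "m > 0"
  shows "card {w \<in> A \<rightarrow>\<^sub>E {0..<int m}. int m dvd (\<Sum>x\<in>A. w x)} = m ^ (card A - 1)"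
  using bij_betw_same_card[OF bij_betw_restrict_PiE_dvd_sum[OF assms]] assms(1,2)
  by (simp add: card_PiE card_Diff_singleton)

definition gr_conv :: "('a, 'b) monoid_scheme \<Rightarrow> ('a \<Rightarrow> int) \<Rightarrow> ('a \<Rightarrow> int) \<Rightarrow> 'a \<Rightarrow> int" where
  "gr_conv G a b g = (\<Sum>h \<in> carrier G. a h * b (inv\<^bsub>G\<^esub> h \<otimes>\<^bsub>G\<^esub> g))"

definition gr_residue :: "nat \<Rightarrow> ('a, 'b) monoid_scheme \<Rightarrow> ('a \<Rightarrow> int) \<Rightarrow> 'a \<Rightarrow> int" where
  "gr_residue m G f = (\<lambda>g. if g \<in> carrier G then f g mod int m else 0)"

definition gr_delta :: "('a, 'b) monoid_scheme \<Rightarrow> 'a \<Rightarrow> int" where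
  "gr_delta G = (\<lambda>g. if g = \<one>\<^bsub>G\<^esub> then 1 else 0)"

definition gr_monoid :: "nat \<Rightarrow> ('a, 'b) monoid_scheme \<Rightarrow> ('a \<Rightarrow> int) monoid" where
  "gr_monoid m G = \<lparr>carrier = gr_elems m G, monoid.mult = gr_mult m G, one = gr_one m G\<rparr>"

locale finite_comm_group = comm_group +
  assumes finite_carrier: "finite (carrier G)"
begin

lemma sum_reindex_mult_left:
  assumes "h \<in> carrier G"
  shows "(\<Sum>k \<in> carrier G. f k) = (\<Sum>j \<in> carrier G. f (h \<otimes> j))"
  by (rule sum.reindex_bij_witness[where i = "\<lambda>j. h \<otimes> j" and j = "\<lambda>k. inv h \<otimes> k"])
     (use assms in \<open>auto simp: m_assoc[symmetric]\<close>)

lemma gr_conv_assoc: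
  assumes g: "g \<in> carrier G"
  shows "gr_conv G (gr_conv G a b) c g = gr_conv G a (gr_conv G b c) g"
proof -
  have "gr_conv G (gr_conv G a b) c g
      = (\<Sum>k \<in> carrier G. \<Sum>h \<in> carrier G. a h * b (inv h \<otimes> k) * c (inv k \<otimes> g))"
    by (simp add: gr_conv_def sum_distrib_right)
  also have "\<dots> = (\<Sum>h \<in> carrier G. \<Sum>k \<in> carrier G. a h * b (inv h \<otimes> k) * c (inv k \<otimes> g))"
    by (rule sum.swap)
  also have "\<dots> = (\<Sum>h \<in> carrier G. a h * gr_conv G b c (inv h \<otimes> g))"
  proof (rule sum.cong[OF refl])
    fix h assume h: "h \<in> carrier G"
    have "(\<Sum>k \<in> carrier G. a h * b (inv h \<otimes> k) * c (inv k \<otimes> g))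
        = (\<Sum>j \<in> carrier G. a h * b (inv h \<otimes> (h \<otimes> j)) * c (inv (h \<otimes> j) \<otimes> g))"
      by (rule sum_reindex_mult_left[OF h])
    also have "\<dots> = (\<Sum>j \<in> carrier G. a h * (b j * c (inv j \<otimes> (inv h \<otimes> g))))"
      using h g by (intro sum.cong refl) (simp add: m_assoc[symmetric] inv_mult_group)
    finally show "(\<Sum>k \<in> carrier G. a h * b (inv h \<otimes> k) * c (inv k \<otimes> g))
        = a h * gr_conv G b c (inv h \<otimes> g)"
      by (simp add: gr_conv_def sum_distrib_left)
  qed
  finally show ?thesis by (simp add: gr_conv_def)
qed

lemma gr_conv_comm:
  assumes g: "g \<in> carrier G"
  shows "gr_conv G a b g = gr_conv G b a g"
  unfolding gr_conv_def
proof (rule sum.reindex_bij_witness[where i = "\<lambda>j. g \<otimes> inv j" and j = "\<lambda>k. inv k \<otimes> g"])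
  fix x assume x: "x \<in> carrier G"
  show "g \<otimes> inv (inv x \<otimes> g) = x"
    using x g by (simp add: inv_mult_group m_assoc[symmetric])
  show "inv (g \<otimes> inv x) \<otimes> g = x"
    using x g by (simp add: inv_mult_group m_assoc m_comm[of "inv g" g])
  show "inv x \<otimes> g \<in> carrier G" "g \<otimes> inv x \<in> carrier G" using x g by simp_all
  have "inv (inv x \<otimes> g) \<otimes> g = x" using x g
    by (simp add: inv_mult_group m_assoc m_lcomm[of "inv g" x g])
  then show "b (inv x \<otimes> g) * a (inv (inv x \<otimes> g) \<otimes> g) = a x * b (inv x \<otimes> g)"
    by simp
qed

lemma gr_conv_delta_left:
  assumes "g \<in> carrier G"
  shows "gr_conv G (gr_delta G) b g = b g"
proof -
  have "gr_conv G (gr_delta G) b g = (\<Sum>h \<in> carrier G. if h = \<one> then b (inv h \<otimes> g) else 0)"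
    by (auto simp: gr_conv_def gr_delta_def intro!: sum.cong)
  also have "\<dots> = b g" using assms finite_carrier by (simp add: sum.delta)
  finally show ?thesis .
qed

lemma gr_conv_delta_right: "g \<in> carrier G \<Longrightarrow> gr_conv G a (gr_delta G) g = a g"
  by (subst gr_conv_comm) (simp_all add: gr_conv_delta_left)

lemma gr_conv_cong:
  assumes "\<And>g. g \<in> carrier G \<Longrightarrow> [a g = a' g] (mod m)"
    and "\<And>g. g \<in> carrier G \<Longrightarrow> [b g = b' g] (mod m)"
    and "g \<in> carrier G"
  shows "[gr_conv G a b g = gr_conv G a' b' g] (mod m)"
  unfolding gr_conv_def using assms by (intro cong_sum cong_mult) auto

lemma gr_conv_eq_on_carrier:
  "(\<And>x. x \<in> carrier G \<Longrightarrow> a x = a' x) \<Longrightarrow> gr_conv G a b g = gr_conv G a' b g"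
  by (simp add: gr_conv_def)

lemma gr_conv_add_left: "gr_conv G (\<lambda>x. a x + a' x) b g = gr_conv G a b g + gr_conv G a' b g"
  by (simp add: gr_conv_def sum.distrib algebra_simps)

lemma gr_conv_add_right: "gr_conv G a (\<lambda>x. b x + b' x) g = gr_conv G a b g + gr_conv G a b' g"
  by (simp add: gr_conv_def sum.distrib algebra_simps)

lemma gr_conv_scale_left: "gr_conv G (\<lambda>x. c * a x) b g = c * gr_conv G a b g"
  by (simp add: gr_conv_def sum_distrib_left algebra_simps)

lemma gr_conv_scale_right: "gr_conv G a (\<lambda>x. c * b x) g = c * gr_conv G a b g"
  by (simp add: gr_conv_def sum_distrib_left algebra_simps)

lemma sum_gr_conv:
  "(\<Sum>g \<in> carrier G. gr_conv G a b g) = (\<Sum>g \<in> carrier G. a g) * (\<Sum>g \<in> carrier G. b g)"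
proof -
  have "(\<Sum>g \<in> carrier G. gr_conv G a b g) = (\<Sum>h \<in> carrier G. \<Sum>g \<in> carrier G. a h * b (inv h \<otimes> g))"
    unfolding gr_conv_def by (rule sum.swap)
  also have "\<dots> = (\<Sum>h \<in> carrier G. a h * (\<Sum>g \<in> carrier G. b g))"
  proof (rule sum.cong[OF refl])
    fix h assume h: "h \<in> carrier G"
    have "(\<Sum>g \<in> carrier G. a h * b (inv h \<otimes> g)) = (\<Sum>j \<in> carrier G. a h * b (inv h \<otimes> (h \<otimes> j)))"
      by (rule sum_reindex_mult_left[OF h])
    also have "\<dots> = (\<Sum>j \<in> carrier G. a h * b j)"
      using h by (intro sum.cong refl) (simp add: m_assoc[symmetric])
    finally show "(\<Sum>g \<in> carrier G. a h * b (inv h \<otimes> g)) = a h * (\<Sum>g \<in> carrier G. b g)"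
      by (simp add: sum_distrib_left)
  qed
  finally show ?thesis by (simp add: sum_distrib_right)
qed

lemma sum_gr_delta: "(\<Sum>g \<in> carrier G. gr_delta G g) = 1"
  using finite_carrier by (simp add: gr_delta_def sum.delta)

lemma gr_mult_eq_residue_conv: "gr_mult m G a b = gr_residue m G (gr_conv G a b)"
  by (simp add: gr_mult_def gr_residue_def gr_conv_def fun_eq_iff)

lemma gr_one_eq_residue_delta: "gr_one m G = gr_residue m G (gr_delta G)"
  by (auto simp: gr_one_def gr_residue_def gr_delta_def fun_eq_iff)

lemma gr_residue_in_gr_elems: "m > 0 \<Longrightarrow> gr_residue m G f \<in> gr_elems m G"
  by (auto simp: gr_residue_def gr_elems_def)

lemma gr_residue_gr_elems: "a \<in> gr_elems m G \<Longrightarrow> gr_residue m G a = a"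
  by (auto simp: gr_residue_def gr_elems_def fun_eq_iff)

lemma gr_residue_eq_iff:
  "gr_residue m G f = gr_residue m G f' \<longleftrightarrow> (\<forall>g \<in> carrier G. [f g = f' g] (mod int m))"
  by (auto simp: gr_residue_def fun_eq_iff cong_def)

lemma gr_residue_cong:
  "(\<And>g. g \<in> carrier G \<Longrightarrow> [f g = f' g] (mod int m)) \<Longrightarrow> gr_residue m G f = gr_residue m G f'"
  by (simp add: gr_residue_eq_iff)

lemma gr_residue_eq_on_carrier:
  "(\<And>g. g \<in> carrier G \<Longrightarrow> f g = f' g) \<Longrightarrow> gr_residue m G f = gr_residue m G f'"
  by (auto simp: gr_residue_def fun_eq_iff)

lemma gr_residue_conv_residue_left:
  "gr_residue m G (gr_conv G (gr_residue m G f) h) = gr_residue m G (gr_conv G f h)"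
  by (intro gr_residue_cong gr_conv_cong) (auto simp: gr_residue_def cong_def)

lemma gr_residue_conv_residue_right:
  "gr_residue m G (gr_conv G h (gr_residue m G f)) = gr_residue m G (gr_conv G h f)"
  by (intro gr_residue_cong gr_conv_cong) (auto simp: gr_residue_def cong_def)

lemma augmentation_gr_residue:
  "augmentation m G (gr_residue m G f) = (\<Sum>g \<in> carrier G. f g) mod int m"
proof -
  have "augmentation m G (gr_residue m G f) = (\<Sum>g \<in> carrier G. f g mod int m) mod int m"
    unfolding augmentation_def gr_residue_def by (simp cong: sum.cong)
  also have "\<dots> = (\<Sum>g \<in> carrier G. f g) mod int m" by (rule mod_sum_eq)
  finally show ?thesis .
qed

lemma augmentation_gr_mult:
  "augmentation m G (gr_mult m G a b) = (augmentation m G a * augmentation m G b) mod int m"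
  by (simp only: gr_mult_eq_residue_conv augmentation_gr_residue sum_gr_conv)
     (simp add: augmentation_def mod_mult_eq)

lemma augmentation_gr_one: "augmentation m G (gr_one m G) = 1 mod int m"
  by (simp add: gr_one_eq_residue_delta augmentation_gr_residue sum_gr_delta)

lemma comm_monoid_gr_monoid:
  assumes "m > 0"
  shows "comm_monoid (gr_monoid m G)"
proof (rule comm_monoidI)
  fix x y z assume x: "x \<in> carrier (gr_monoid m G)"
  show "x \<otimes>\<^bsub>gr_monoid m G\<^esub> y \<in> carrier (gr_monoid m G)"
    using assms by (simp add: gr_monoid_def gr_mult_eq_residue_conv gr_residue_in_gr_elems)
  show "x \<otimes>\<^bsub>gr_monoid m G\<^esub> y \<otimes>\<^bsub>gr_monoid m G\<^esub> z
      = x \<otimes>\<^bsub>gr_monoid m G\<^esub> (y \<otimes>\<^bsub>gr_monoid m G\<^esub> z)"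
    by (simp add: gr_monoid_def gr_mult_eq_residue_conv gr_residue_conv_residue_left
        gr_residue_conv_residue_right gr_conv_assoc cong: gr_residue_eq_on_carrier)
  show "x \<otimes>\<^bsub>gr_monoid m G\<^esub> y = y \<otimes>\<^bsub>gr_monoid m G\<^esub> x"
    by (simp add: gr_monoid_def gr_mult_eq_residue_conv gr_conv_comm cong: gr_residue_eq_on_carrier)
  show "\<one>\<^bsub>gr_monoid m G\<^esub> \<otimes>\<^bsub>gr_monoid m G\<^esub> x = x"
    using x by (simp add: gr_monoid_def gr_mult_eq_residue_conv gr_one_eq_residue_delta
        gr_residue_conv_residue_left gr_conv_delta_left gr_residue_gr_elems
        cong: gr_residue_eq_on_carrier)
qed (use assms in \<open>simp add: gr_monoid_def gr_one_eq_residue_delta gr_residue_in_gr_elems\<close>)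

lemma carrier_V_eq_Units:
  "carrier (V m G) = {a \<in> Units (gr_monoid m G). augmentation m G a = 1 mod int m}"
  by (auto simp: V_def Units_def gr_monoid_def)

lemma V_mult: "monoid.mult (V m G) = monoid.mult (gr_monoid m G)"
  and V_one: "one (V m G) = one (gr_monoid m G)"
  by (simp_all add: V_def gr_monoid_def)

lemma augmentation_mult_gr_monoid:
  "augmentation m G (x \<otimes>\<^bsub>gr_monoid m G\<^esub> y) = (augmentation m G x * augmentation m G y) mod int m"
  by (simp add: gr_monoid_def augmentation_gr_mult)

lemma augmentation_one_gr_monoid: "augmentation m G \<one>\<^bsub>gr_monoid m G\<^esub> = 1 mod int m"
  by (simp add: gr_monoid_def augmentation_gr_one)

lemma inv_gr_monoid_in_V:
  assumes "m > 0" and "x \<in> carrier (V m G)"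
  shows "inv\<^bsub>gr_monoid m G\<^esub> x \<in> carrier (V m G)"
proof -
  interpret comm_monoid "gr_monoid m G" by (rule comm_monoid_gr_monoid[OF assms(1)])
  let ?y = "inv\<^bsub>gr_monoid m G\<^esub> x"
  have x: "x \<in> Units (gr_monoid m G)" "augmentation m G x = 1 mod int m"
    using assms(2) by (auto simp: carrier_V_eq_Units)
  then have "augmentation m G (?y \<otimes>\<^bsub>gr_monoid m G\<^esub> x) = augmentation m G \<one>\<^bsub>gr_monoid m G\<^esub>"
    by simp
  then have "(augmentation m G ?y * augmentation m G x) mod int m = 1 mod int m"
    by (simp only: augmentation_mult_gr_monoid augmentation_one_gr_monoid)
  then have "augmentation m G ?y mod int m = 1 mod int m"
    by (metis x(2) mod_mult_right_eq mult.right_neutral)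
  then show ?thesis
    using x by (simp add: carrier_V_eq_Units augmentation_def)
qed

lemma comm_group_V:
  assumes "m > 0"
  shows "comm_group (V m G)"
proof -
  interpret R: comm_monoid "gr_monoid m G" by (rule comm_monoid_gr_monoid[OF assms])
  show ?thesis
  proof (rule comm_groupI)
    fix x assume x: "x \<in> carrier (V m G)"
    then have "inv\<^bsub>gr_monoid m G\<^esub> x \<otimes>\<^bsub>gr_monoid m G\<^esub> x = \<one>\<^bsub>gr_monoid m G\<^esub>"
      by (simp add: carrier_V_eq_Units)
    then show "\<exists>y \<in> carrier (V m G). y \<otimes>\<^bsub>V m G\<^esub> x = \<one>\<^bsub>V m G\<^esub>"
      using inv_gr_monoid_in_V[OF assms x] by (auto simp: V_mult V_one)
  next
    fix x y assume "x \<in> carrier (V m G)" "y \<in> carrier (V m G)"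
    then show "x \<otimes>\<^bsub>V m G\<^esub> y \<in> carrier (V m G)"
      by (auto simp: carrier_V_eq_Units V_mult augmentation_mult_gr_monoid mod_mult_eq)
  next
    show "\<one>\<^bsub>V m G\<^esub> \<in> carrier (V m G)"
      by (simp add: carrier_V_eq_Units V_one augmentation_one_gr_monoid)
  next
    fix x y z assume "x \<in> carrier (V m G)" "y \<in> carrier (V m G)" "z \<in> carrier (V m G)"
    then show "x \<otimes>\<^bsub>V m G\<^esub> y \<otimes>\<^bsub>V m G\<^esub> z = x \<otimes>\<^bsub>V m G\<^esub> (y \<otimes>\<^bsub>V m G\<^esub> z)"
      by (auto simp: carrier_V_eq_Units V_mult intro!: R.m_assoc)
  next
    fix x assume "x \<in> carrier (V m G)"
    then show "\<one>\<^bsub>V m G\<^esub> \<otimes>\<^bsub>V m G\<^esub> x = x"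
      by (auto simp: carrier_V_eq_Units V_mult V_one)
  next
    fix x y assume "x \<in> carrier (V m G)" "y \<in> carrier (V m G)"
    then show "x \<otimes>\<^bsub>V m G\<^esub> y = y \<otimes>\<^bsub>V m G\<^esub> x"
      by (auto simp: carrier_V_eq_Units V_mult intro!: R.m_comm)
  qed
qed

end

(* keep \<open>int (p^k)\<close> in the shape of the statement rather than \<open>int p ^ k\<close> *)
declare of_nat_power [simp del]

locale group_ring_prime_power = finite_comm_group +
  fixes p e :: nat
  assumes prime_p: "Factorial_Ring.prime p" and two_le_e: "e \<ge> 2"
begin

lemma two_le_p: "p \<ge> 2"
  using prime_p by (simp add: prime_ge_2_nat)

lemma pow_pos: "p ^ k > 0"
  using two_le_p by simp

lemma gr_residue_pow_in_gr_elems: "gr_residue (p^k) G f \<in> gr_elems (p^k) G"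
  by (rule gr_residue_in_gr_elems[OF pow_pos])

lemma int_pow_e_eq: "int (p^e) = int (p^(e-1)) * int p"
proof -
  have "p^e = p^(e-1) * p" using two_le_e power_minus_mult[of e p] by simp
  then show ?thesis by simp
qed

lemma pow_e_dvd_square: "int (p^e) dvd int (p^(e-1)) * int (p^(e-1))"
proof -
  have "p^e dvd p^(e-1 + (e-1))" using two_le_e by (intro le_imp_power_dvd) auto
  then show ?thesis by (simp add: power_add flip: of_nat_mult)
qed

definition one_plus :: "('a \<Rightarrow> int) \<Rightarrow> 'a \<Rightarrow> int" where
  "one_plus f = gr_residue (p^e) G (\<lambda>g. gr_delta G g + int (p^(e-1)) * f g)"

lemma one_plus_in_gr_elems: "one_plus f \<in> gr_elems (p^e) G"
  by (simp add: one_plus_def gr_residue_pow_in_gr_elems)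

lemma one_plus_cong:
  assumes "\<And>g. g \<in> carrier G \<Longrightarrow> [f g = f' g] (mod int p)"
  shows "one_plus f = one_plus f'"
proof -
  have "[int (p^(e-1)) * f g = int (p^(e-1)) * f' g] (mod int (p^e))" if "g \<in> carrier G" for g
    using assms[OF that] by (simp add: int_pow_e_eq cong_def mod_mult_mult1)
  then show ?thesis unfolding one_plus_def by (intro gr_residue_cong cong_add cong_refl)
qed

lemma one_plus_zero: "one_plus (\<lambda>g. 0) = gr_one (p^e) G"
  by (simp add: one_plus_def gr_one_eq_residue_delta)

lemma augmentation_one_plus:
  "augmentation (p^e) G (one_plus f) = (1 + int (p^(e-1)) * (\<Sum>g \<in> carrier G. f g)) mod int (p^e)"
  by (simp add: one_plus_def augmentation_gr_residue sum.distrib sum_gr_delta sum_distrib_left)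

text \<open>The cross term \<open>p^(e-1) f \<cdot> p^(e-1) h\<close> vanishes modulo \<open>p^e\<close>.\<close>

lemma gr_conv_one_plus_cong:
  assumes g: "g \<in> carrier G"
  shows "[gr_conv G (\<lambda>x. gr_delta G x + int (p^(e-1)) * f x) (\<lambda>x. gr_delta G x + int (p^(e-1)) * h x) g
          = gr_delta G g + int (p^(e-1)) * (f g + h g)] (mod int (p^e))"
proof -
  let ?N = "int (p^(e-1))"
  have "gr_conv G (\<lambda>x. gr_delta G x + ?N * f x) (\<lambda>x. gr_delta G x + ?N * h x) g
      = gr_delta G g + ?N * (f g + h g) + ?N * ?N * gr_conv G f h g"
    using g by (simp only: gr_conv_add_left gr_conv_add_right gr_conv_scale_left gr_conv_scale_right
        gr_conv_delta_left gr_conv_delta_right) (simp add: algebra_simps)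
  moreover have "[?N * ?N * gr_conv G f h g = 0] (mod int (p^e))"
    using pow_e_dvd_square by (simp add: cong_0_iff)
  ultimately show ?thesis
    using cong_add[OF cong_refl] by fastforce
qed

lemma one_plus_mult: "gr_mult (p^e) G (one_plus f) (one_plus h) = one_plus (\<lambda>g. f g + h g)"
  unfolding gr_mult_eq_residue_conv one_plus_def gr_residue_conv_residue_left
    gr_residue_conv_residue_right
  by (rule gr_residue_cong) (rule gr_conv_one_plus_cong)

lemma one_plus_in_V:
  assumes "int p dvd (\<Sum>g \<in> carrier G. f g)"
  shows "one_plus f \<in> carrier (V (p^e) G)"
proof -
  have "[1 + int (p^(e-1)) * (\<Sum>g \<in> carrier G. f g) = 1] (mod int (p^e))"
    using assms by (auto simp: int_pow_e_eq cong_iff_dvd_diff)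
  then have "augmentation (p^e) G (one_plus f) = 1 mod int (p^e)"
    by (simp add: augmentation_one_plus cong_def)
  moreover have "gr_mult (p^e) G (one_plus f) (one_plus (\<lambda>g. - f g)) = gr_one (p^e) G"
    "gr_mult (p^e) G (one_plus (\<lambda>g. - f g)) (one_plus f) = gr_one (p^e) G"
    by (simp_all add: one_plus_mult flip: one_plus_zero)
  ultimately show ?thesis using one_plus_in_gr_elems by (auto simp: V_def)
qed

lemma one_plus_pow: "one_plus f [^]\<^bsub>V (p^e) G\<^esub> k = one_plus (\<lambda>g. int k * f g)"
  by (induction k) (simp_all add: V_mult V_one gr_monoid_def one_plus_zero one_plus_mult algebra_simps)

lemma one_plus_pow_p: "one_plus f [^]\<^bsub>V (p^e) G\<^esub> p = \<one>\<^bsub>V (p^e) G\<^esub>"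
proof -
  have "one_plus (\<lambda>g. int p * f g) = one_plus (\<lambda>g. 0)" by (rule one_plus_cong) (simp add: cong_0_iff)
  then show ?thesis by (simp add: one_plus_pow V_one gr_monoid_def one_plus_zero)
qed

lemma one_plus_aug_eq_image: "one_plus_aug p e G = one_plus ` aug_ideal (p^e) G"
proof -
  have "gr_add (p^e) G (gr_one (p^e) G) (gr_scal (p^e) G (int (p^(e-1))) z) = one_plus z" for z
    by (auto simp: fun_eq_iff gr_add_def gr_one_def gr_scal_def one_plus_def gr_residue_def
        gr_delta_def mod_add_eq)
  then show ?thesis unfolding one_plus_aug_def by auto
qed

lemma dvd_sum_if_aug_ideal: "z \<in> aug_ideal (p^e) G \<Longrightarrow> int p dvd (\<Sum>g \<in> carrier G. z g)"
  unfolding aug_ideal_def augmentation_def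
  by (auto simp: int_pow_e_eq dest!: mod_0_imp_dvd intro: dvd_mult_left)

text \<open>Subtracting the augmentation at the identity moves \<open>f\<close> into the augmentation ideal
without changing it modulo \<open>p\<close>.\<close>

lemma one_plus_in_one_plus_aug:
  assumes "int p dvd (\<Sum>g \<in> carrier G. f g)"
  shows "one_plus f \<in> one_plus_aug p e G"
proof -
  let ?S = "\<Sum>g \<in> carrier G. f g"
  define z where "z = gr_residue (p^e) G (\<lambda>g. f g - ?S * gr_delta G g)"
  have "(\<Sum>g \<in> carrier G. f g - ?S * gr_delta G g) = 0"
    by (simp add: sum_subtractf sum_distrib_left[symmetric] sum_gr_delta)
  then have "z \<in> aug_ideal (p^e) G"
    by (simp add: z_def aug_ideal_def gr_residue_pow_in_gr_elems augmentation_gr_residue)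
  moreover have "one_plus z = one_plus f"
  proof (rule one_plus_cong)
    fix g assume "g \<in> carrier G"
    then have "[z g = f g - ?S * gr_delta G g] (mod int p)"
      by (simp add: z_def gr_residue_def int_pow_e_eq cong_def mod_mod_cancel)
    also have "[f g - ?S * gr_delta G g = f g] (mod int p)"
      using assms by (simp add: cong_iff_dvd_diff)
    finally show "[z g = f g] (mod int p)" .
  qed
  ultimately show ?thesis unfolding one_plus_aug_eq_image by (metis image_eqI)
qed

lemma gr_reduce_residue: "gr_reduce (p^(e-1)) (gr_residue (p^e) G f) = gr_residue (p^(e-1)) G f"
  by (auto simp: gr_reduce_def gr_residue_def fun_eq_iff int_pow_e_eq mod_mod_cancel)

lemma gr_reduce_gr_elems: "a \<in> gr_elems (p^e) G \<Longrightarrow> gr_reduce (p^(e-1)) a = gr_residue (p^(e-1)) G a"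
  by (metis gr_residue_gr_elems gr_reduce_residue)

lemma gr_reduce_mult: "gr_reduce (p^(e-1)) (gr_mult (p^e) G a b)
   = gr_mult (p^(e-1)) G (gr_residue (p^(e-1)) G a) (gr_residue (p^(e-1)) G b)"
  unfolding gr_mult_eq_residue_conv gr_reduce_residue gr_residue_conv_residue_left
    gr_residue_conv_residue_right ..

lemma gr_reduce_one: "gr_reduce (p^(e-1)) (gr_one (p^e) G) = gr_one (p^(e-1)) G"
  unfolding gr_one_eq_residue_delta gr_reduce_residue ..

lemma gr_reduce_in_V:
  assumes "a \<in> carrier (V (p^e) G)"
  shows "gr_reduce (p^(e-1)) a \<in> carrier (V (p^(e-1)) G)"
proof -
  from assms obtain b where a: "a \<in> gr_elems (p^e) G" "augmentation (p^e) G a = 1 mod int (p^e)"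
    and b: "b \<in> gr_elems (p^e) G" "gr_mult (p^e) G a b = gr_one (p^e) G"
      "gr_mult (p^e) G b a = gr_one (p^e) G"
    by (auto simp: V_def)
  have "[(\<Sum>g \<in> carrier G. a g) = 1] (mod int (p^e))"
    using a(2) by (simp add: augmentation_def cong_def)
  then have "[(\<Sum>g \<in> carrier G. a g) = 1] (mod int (p^(e-1)))"
    by (rule cong_dvd_modulus) (simp add: int_pow_e_eq)
  then have "augmentation (p^(e-1)) G (gr_residue (p^(e-1)) G a) = 1 mod int (p^(e-1))"
    by (simp add: augmentation_gr_residue cong_def)
  moreover have "gr_mult (p^(e-1)) G (gr_residue (p^(e-1)) G a) (gr_residue (p^(e-1)) G b)
        = gr_one (p^(e-1)) G"
      "gr_mult (p^(e-1)) G (gr_residue (p^(e-1)) G b) (gr_residue (p^(e-1)) G a)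
        = gr_one (p^(e-1)) G"
    by (simp_all only: gr_reduce_mult[symmetric] b gr_reduce_one)
  moreover have "gr_residue (p^(e-1)) G a \<in> gr_elems (p^(e-1)) G"
    "gr_residue (p^(e-1)) G b \<in> gr_elems (p^(e-1)) G"
    by (simp_all add: gr_residue_pow_in_gr_elems)
  ultimately have "gr_residue (p^(e-1)) G a \<in> carrier (V (p^(e-1)) G)"
    unfolding V_def by (auto intro!: bexI[of _ "gr_residue (p^(e-1)) G b"])
  then show ?thesis unfolding gr_reduce_gr_elems[OF a(1)] .
qed

lemma gr_reduce_hom: "gr_reduce (p^(e-1)) \<in> hom (V (p^e) G) (V (p^(e-1)) G)"
proof -
  have "gr_reduce (p^(e-1)) (gr_mult (p^e) G a b)
      = gr_mult (p^(e-1)) G (gr_reduce (p^(e-1)) a) (gr_reduce (p^(e-1)) b)"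
    if "a \<in> carrier (V (p^e) G)" "b \<in> carrier (V (p^e) G)" for a b
  proof -
    have "a \<in> gr_elems (p^e) G" "b \<in> gr_elems (p^e) G" using that by (auto simp: V_def)
    then show ?thesis by (simp only: gr_reduce_mult gr_reduce_gr_elems)
  qed
  then show ?thesis using gr_reduce_in_V by (auto simp: hom_def V_mult gr_monoid_def)
qed

lemma gr_reduce_one_plus: "gr_reduce (p^(e-1)) (one_plus f) = gr_one (p^(e-1)) G"
  unfolding one_plus_def gr_reduce_residue gr_one_eq_residue_delta
  by (rule gr_residue_cong) (simp add: cong_iff_dvd_diff)

lemma obtain_one_plus_of_gr_reduce_eq_one:
  assumes "a \<in> gr_elems (p^e) G" and "gr_reduce (p^(e-1)) a = gr_one (p^(e-1)) G"
  obtains w where "a = one_plus w"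
proof -
  have "gr_residue (p^(e-1)) G a = gr_residue (p^(e-1)) G (gr_delta G)"
    using assms(2) unfolding gr_reduce_gr_elems[OF assms(1)] gr_one_eq_residue_delta .
  then have "\<And>g. g \<in> carrier G \<Longrightarrow> [a g = gr_delta G g] (mod int (p^(e-1)))"
    unfolding gr_residue_eq_iff by blast
  then obtain w where w: "\<forall>g \<in> carrier G. a g = gr_delta G g + int (p^(e-1)) * w g"
    by (rule cong_obtain_quotient)
  have "a = gr_residue (p^e) G a" using assms(1) by (simp add: gr_residue_gr_elems)
  also have "\<dots> = one_plus w" unfolding one_plus_def by (rule gr_residue_eq_on_carrier) (simp add: w)
  finally show ?thesis by (rule that)
qed

lemma kernel_gr_reduce:
  "kernel (V (p^e) G) (V (p^(e-1)) G) (gr_reduce (p^(e-1))) = one_plus_aug p e G"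
proof
  show "one_plus_aug p e G \<subseteq> kernel (V (p^e) G) (V (p^(e-1)) G) (gr_reduce (p^(e-1)))"
    using one_plus_in_V[OF dvd_sum_if_aug_ideal] gr_reduce_one_plus
    by (auto simp: one_plus_aug_eq_image kernel_def V_one gr_monoid_def)
next
  show "kernel (V (p^e) G) (V (p^(e-1)) G) (gr_reduce (p^(e-1))) \<subseteq> one_plus_aug p e G"
  proof
    fix a assume "a \<in> kernel (V (p^e) G) (V (p^(e-1)) G) (gr_reduce (p^(e-1)))"
    then have a: "a \<in> gr_elems (p^e) G" "augmentation (p^e) G a = 1 mod int (p^e)"
      "gr_reduce (p^(e-1)) a = gr_one (p^(e-1)) G"
      by (auto simp: kernel_def V_one gr_monoid_def V_def)
    obtain w where aw: "a = one_plus w"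
      using a(1,3) by (rule obtain_one_plus_of_gr_reduce_eq_one)
    let ?N = "int (p^(e-1))"
    have "[1 + ?N * (\<Sum>g \<in> carrier G. w g) = 1 + 0] (mod int (p^e))"
      using a(2) by (simp add: aw augmentation_one_plus cong_def)
    then have "[?N * (\<Sum>g \<in> carrier G. w g) = 0] (mod int (p^e))"
      by (metis cong_add_lcancel)
    then have "?N * int p dvd ?N * (\<Sum>g \<in> carrier G. w g)"
      by (simp only: cong_0_iff int_pow_e_eq)
    moreover have "?N > 0" using pow_pos[of "e-1"] by (simp only: of_nat_0_less_iff)
    ultimately have "int p dvd (\<Sum>g \<in> carrier G. w g)"
      by (metis dvd_mult_cancel_left less_irrefl)
    then show "a \<in> one_plus_aug p e G" by (simp add: aw one_plus_in_one_plus_aug)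
  qed
qed

definition aug_residues :: "('a \<Rightarrow> int) set" where
  "aug_residues = {w \<in> carrier G \<rightarrow>\<^sub>E {0..<int p}. int p dvd (\<Sum>g \<in> carrier G. w g)}"

lemma one_plus_aug_eq_image_aug_residues: "one_plus_aug p e G = one_plus ` aug_residues"
proof
  show "one_plus ` aug_residues \<subseteq> one_plus_aug p e G"
    by (rule image_subsetI, rule one_plus_in_one_plus_aug) (simp add: aug_residues_def)
next
  show "one_plus_aug p e G \<subseteq> one_plus ` aug_residues"
  proof
    fix x assume "x \<in> one_plus_aug p e G"
    then obtain z where z: "z \<in> aug_ideal (p^e) G" and x: "x = one_plus z"
      by (auto simp: one_plus_aug_eq_image)
    define w where "w = restrict (\<lambda>g. z g mod int p) (carrier G)"
    have "(\<Sum>g \<in> carrier G. w g) mod int p = (\<Sum>g \<in> carrier G. z g) mod int p"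
      unfolding w_def by (simp add: mod_sum_eq)
    then have "int p dvd (\<Sum>g \<in> carrier G. w g)"
      using dvd_sum_if_aug_ideal[OF z] by (simp add: dvd_eq_mod_eq_0)
    moreover have "w \<in> carrier G \<rightarrow>\<^sub>E {0..<int p}" using two_le_p by (simp add: w_def)
    ultimately have "w \<in> aug_residues" by (simp add: aug_residues_def)
    moreover have "one_plus z = one_plus w"
      by (rule one_plus_cong) (simp add: w_def cong_def)
    ultimately show "x \<in> one_plus ` aug_residues" using x by auto
  qed
qed

lemma one_plus_apply:
  assumes g: "g \<in> carrier G" and w: "0 \<le> w g" "w g < int p"
  shows "one_plus w g = gr_delta G g + int (p^(e-1)) * w g"
proof -
  let ?N = "int (p^(e-1))"
  have "?N * w g \<le> ?N * (int p - 1)" using w by (intro mult_left_mono) auto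
  then have "?N * w g \<le> int (p^e) - ?N" by (simp add: int_pow_e_eq algebra_simps)
  moreover have "0 \<le> gr_delta G g" "gr_delta G g \<le> 1" by (auto simp: gr_delta_def)
  moreover have "0 \<le> ?N * w g" using w by simp
  moreover have "p^1 \<le> p^(e-1)" using two_le_p two_le_e by (intro power_increasing) auto
  then have "2 \<le> p^(e-1)" using two_le_p by simp
  then have "?N \<ge> 2" by (metis of_nat_le_iff of_nat_numeral)
  ultimately have "0 \<le> gr_delta G g + ?N * w g" "gr_delta G g + ?N * w g < int (p^e)"
    by linarith+
  then show ?thesis using g unfolding one_plus_def gr_residue_def by (simp only: if_True mod_pos_pos_trivial)
qed

lemma inj_on_one_plus_aug_residues: "inj_on one_plus aug_residues"
proof (rule inj_onI)
  fix w w' assume w: "w \<in> aug_residues" and w': "w' \<in> aug_residues" and eq: "one_plus w = one_plus w'"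
  show "w = w'"
  proof (rule PiE_ext)
    show "w \<in> carrier G \<rightarrow>\<^sub>E {0..<int p}" "w' \<in> carrier G \<rightarrow>\<^sub>E {0..<int p}"
      using w w' by (auto simp: aug_residues_def)
    fix g assume g: "g \<in> carrier G"
    then have "w g \<in> {0..<int p}" "w' g \<in> {0..<int p}" using w w' by (auto simp: aug_residues_def)
    then have "int (p^(e-1)) * w g = int (p^(e-1)) * w' g"
      using eq one_plus_apply[OF g] by (metis atLeastLessThan_iff add_left_cancel)
    then show "w g = w' g" using pow_pos[of "e-1"] by (metis mult_cancel_left of_nat_0_less_iff less_irrefl)
  qed
qed

lemma card_one_plus_aug: "card (one_plus_aug p e G) = p ^ (card (carrier G) - 1)"
proof -
  have "card (one_plus_aug p e G) = card aug_residues"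
    unfolding one_plus_aug_eq_image_aug_residues by (rule card_image[OF inj_on_one_plus_aug_residues])
  also have "\<dots> = p ^ (card (carrier G) - 1)"
    unfolding aug_residues_def using finite_carrier one_closed two_le_p by (intro card_PiE_dvd_sum) auto
  finally show ?thesis .
qed

text \<open>If \<open>a c = 1 + p^(e-1) r\<close> then \<open>c (1 - p^(e-1) r)\<close> inverts \<open>a\<close> modulo \<open>p^e\<close>.\<close>

lemma ex_inverse_if_residue_inverse:
  assumes ac: "gr_residue (p^(e-1)) G (gr_conv G a c) = gr_one (p^(e-1)) G"
  shows "\<exists>a' \<in> gr_elems (p^e) G.
           gr_mult (p^e) G a a' = gr_one (p^e) G \<and> gr_mult (p^e) G a' a = gr_one (p^e) G"
proof -
  let ?N = "int (p^(e-1))"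
  have "\<And>g. g \<in> carrier G \<Longrightarrow> [gr_conv G a c g = gr_delta G g] (mod ?N)"
    using ac unfolding gr_one_eq_residue_delta gr_residue_eq_iff by blast
  then obtain r where r: "\<forall>g \<in> carrier G. gr_conv G a c g = gr_delta G g + ?N * r g"
    by (rule cong_obtain_quotient)
  define a' where "a' = gr_residue (p^e) G (gr_conv G c (\<lambda>g. gr_delta G g + ?N * - r g))"
  have "gr_mult (p^e) G a a'
      = gr_residue (p^e) G (gr_conv G (gr_conv G a c) (\<lambda>g. gr_delta G g + ?N * - r g))"
    unfolding a'_def gr_mult_eq_residue_conv gr_residue_conv_residue_right
    by (intro gr_residue_eq_on_carrier) (simp add: gr_conv_assoc)
  also have "\<dots> = gr_residue (p^e) G
      (gr_conv G (\<lambda>g. gr_delta G g + ?N * r g) (\<lambda>g. gr_delta G g + ?N * - r g))"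
    by (intro gr_residue_eq_on_carrier gr_conv_eq_on_carrier) (simp add: r)
  also have "\<dots> = gr_residue (p^e) G (\<lambda>g. gr_delta G g + ?N * (r g + - r g))"
    by (rule gr_residue_cong) (rule gr_conv_one_plus_cong)
  also have "\<dots> = gr_one (p^e) G" by (simp add: gr_one_eq_residue_delta)
  finally have "gr_mult (p^e) G a a' = gr_one (p^e) G" .
  moreover have "gr_mult (p^e) G a' a = gr_mult (p^e) G a a'"
    unfolding gr_mult_eq_residue_conv by (intro gr_residue_eq_on_carrier gr_conv_comm)
  moreover have "a' \<in> gr_elems (p^e) G" by (simp add: a'_def gr_residue_pow_in_gr_elems)
  ultimately show ?thesis by auto
qed

text \<open>A normalized unit \<open>b\<close> modulo \<open>p^(e-1)\<close> is lifted by correcting the coefficient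
at the identity so that the augmentation becomes exactly 1.\<close>

lemma gr_reduce_surj: "gr_reduce (p^(e-1)) ` carrier (V (p^e) G) = carrier (V (p^(e-1)) G)"
proof
  show "gr_reduce (p^(e-1)) ` carrier (V (p^e) G) \<subseteq> carrier (V (p^(e-1)) G)"
    using gr_reduce_in_V by auto
next
  show "carrier (V (p^(e-1)) G) \<subseteq> gr_reduce (p^(e-1)) ` carrier (V (p^e) G)"
  proof
    fix b assume "b \<in> carrier (V (p^(e-1)) G)"
    then obtain c where b: "b \<in> gr_elems (p^(e-1)) G"
        "augmentation (p^(e-1)) G b = 1 mod int (p^(e-1))"
      and bc: "gr_mult (p^(e-1)) G b c = gr_one (p^(e-1)) G"
      by (auto simp: V_def)
    let ?s = "\<Sum>g \<in> carrier G. b g"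
    define a where "a = gr_residue (p^e) G (\<lambda>g. b g + (1 - ?s) * gr_delta G g)"
    have a_elem: "a \<in> gr_elems (p^e) G" by (simp add: a_def gr_residue_pow_in_gr_elems)
    have "int (p^(e-1)) dvd 1 - ?s"
      using b(2) by (simp add: augmentation_def mod_eq_dvd_iff dvd_diff_commute)
    then have "gr_residue (p^(e-1)) G (\<lambda>g. b g + (1 - ?s) * gr_delta G g) = gr_residue (p^(e-1)) G b"
      by (intro gr_residue_cong) (simp add: cong_iff_dvd_diff)
    then have ab: "gr_reduce (p^(e-1)) a = b"
      unfolding a_def gr_reduce_residue gr_residue_gr_elems[OF b(1)] .
    have "augmentation (p^e) G a = 1 mod int (p^e)"
      by (simp add: a_def augmentation_gr_residue sum.distrib sum_distrib_left[symmetric] sum_gr_delta)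
    moreover have "gr_residue (p^(e-1)) G (gr_conv G a c) = gr_one (p^(e-1)) G"
      using bc ab gr_reduce_gr_elems[OF a_elem]
      by (simp add: gr_mult_eq_residue_conv gr_residue_conv_residue_left)
    ultimately have "a \<in> carrier (V (p^e) G)"
      using a_elem ex_inverse_if_residue_inverse by (simp add: V_def)
    then show "b \<in> gr_reduce (p^(e-1)) ` carrier (V (p^e) G)" using ab by (metis image_eqI)
  qed
qed

end

theorem lemma6:
  fixes G :: "('a, 'b) monoid_scheme" and p e :: nat
  assumes "Factorial_Ring.prime p" and "e \<ge> 2"
    and "comm_group G" and "finite (carrier G)"
    and "\<exists>k. card (carrier G) = p ^ k"
  shows "gr_reduce (p^(e-1)) \<in> hom (V (p^e) G) (V (p^(e-1)) G)
    \<and> kernel (V (p^e) G) (V (p^(e-1)) G) (gr_reduce (p^(e-1))) = one_plus_aug p e G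
    \<and> subgroup (one_plus_aug p e G) (V (p^e) G)
    \<and> comm_group ((V (p^e) G)\<lparr>carrier := one_plus_aug p e G\<rparr>)
    \<and> (\<forall>x \<in> one_plus_aug p e G. x [^]\<^bsub>V (p^e) G\<^esub> p = \<one>\<^bsub>V (p^e) G\<^esub>)
    \<and> card (one_plus_aug p e G) = p ^ (card (carrier G) - 1)
    \<and> (V (p^e) G) Mod (one_plus_aug p e G) \<cong> V (p^(e-1)) G"
proof -
  interpret group_ring_prime_power G p e
    using assms by (intro group_ring_prime_power.intro finite_comm_group.intro
        finite_comm_group_axioms.intro group_ring_prime_power_axioms.intro)
  have comm_V: "comm_group (V (p^e) G)" "comm_group (V (p^(e-1)) G)"
    by (intro comm_group_V pow_pos)+
  have hom: "group_hom (V (p^e) G) (V (p^(e-1)) G) (gr_reduce (p^(e-1)))"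
    using comm_V gr_reduce_hom by (simp add: group_hom_def group_hom_axioms_def comm_group_def)
  have sub: "subgroup (one_plus_aug p e G) (V (p^e) G)"
    using group_hom.subgroup_kernel[OF hom] unfolding kernel_gr_reduce .
  have pow: "\<forall>x \<in> one_plus_aug p e G. x [^]\<^bsub>V (p^e) G\<^esub> p = \<one>\<^bsub>V (p^e) G\<^esub>"
    unfolding one_plus_aug_eq_image using one_plus_pow_p by blast
  have iso: "(V (p^e) G) Mod (one_plus_aug p e G) \<cong> V (p^(e-1)) G"
    using group_hom.FactGroup_iso[OF hom gr_reduce_surj] unfolding kernel_gr_reduce .
  show ?thesis
    using gr_reduce_hom kernel_gr_reduce sub comm_group_subgroup_carrier[OF comm_V(1) sub] pow
      card_one_plus_aug iso
    by (intro conjI)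
qed

end
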